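(* Let $\gamma$ be an orbit of the regularized planar two-center problem lying on a regular torus $\mathbb{T}$ with rotation number $W$. If $\gamma$ passes through collision points at two distinct times (i.e. $\gamma$ contains an orbit segment connecting two collisions), then $W$ is rational.
   Context: Fix $d>0$ and masses $m_1,m_2>0$ at $(-d,0)$ and $(d,0)$. A test particle moves with Hamiltonian $H=\tfrac12(p_x^2+p_y^2)-m_1/\sqrt{(x+d)^2+y^2}-m_2/\sqrt{(x-d)^2+y^2}$; energies $h<0$. Regularization: $(\lambda,\nu)\in\mathbb{R}\times(\mathbb{R}/2\pi\mathbb{Z})$ with $x+iy=d\sin(\nu+i\lambda)$ (a double cover branched over the centers), conjugate momenta $p_\lambda,p_\nu$, time change $dt=d^2(\cosh^2\lambda-\sin^2\nu)\,d\tau$. On $H=h$ the motion becomes the flow (time $\tau$, defined also through collisions) of $H_\lambda+H_\nu$ on its zero level, $H_\lambda=\tfrac12p_\lambda^2-d(m_1+m_2)\cosh\lambda-hd^2\cosh^2\lambda$, $H_\nu=\tfrac12p_\nu^2+d(m_1-m_2)\sin\nu+hd^2\sin^2\nu$; orbits lie in sets $\{H_\lambda=-g,\ H_\nu=g\}$ for a separation constant $g$. Regular torus: a compact connected component $\mathbb{T}=C_\lambda\times C_\nu$ of such a set with $-g$ a regular value of $H_\lambda$ and $g$ a regular value of $H_\nu$ ($C_\lambda$ a closed curve in the $(\lambda,p_\lambda)$-plane, $C_\nu$ a closed curve in the cylinder $(\mathbb{R}/2\pi\mathbb{Z})\times\mathbb{R}$). Rotation number $W=T_\nu/T_\lambda$,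 where $T_\lambda,T_\nu$ are the $\tau$-periods of the motions on $C_\lambda,C_\nu$; in angle coordinates $\theta_1$ along $C_\nu$, $\theta_2$ along $C_\lambda$ (each in $\mathbb{R}/\mathbb{Z}$, increasing uniformly in $\tau$ with period 1) orbits on $\mathbb{T}$ lift to lines $\theta_2=W\theta_1+\mathrm{const}$. Collision points are the points of $\mathbb{T}$ with $\lambda=0$ and $\nu\equiv\pm\pi/2 \pmod{2\pi}$ (they project to the two centers). *)

theory Defs
  imports "HOL-Analysis.Analysis"
begin

definition Hlam :: "real \<Rightarrow> real \<Rightarrow> real \<Rightarrow> real \<Rightarrow> real \<times> real \<Rightarrow> real" where
  "Hlam d m1 m2 h = (\<lambda>(l, p). p^2 / 2 - d * (m1 + m2) * cosh l - h * d^2 * (cosh l)^2)"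

definition Hnu :: "real \<Rightarrow> real \<Rightarrow> real \<Rightarrow> real \<Rightarrow> real \<times> real \<Rightarrow> real" where
  "Hnu d m1 m2 h = (\<lambda>(v, p). p^2 / 2 + d * (m1 - m2) * sin v + h * d^2 * (sin v)^2)"

text \<open>The cylinder \<open>(\<real>/2\<pi>\<int>) \<times> \<real>\<close> realised as \<open>S\<^sup>1 \<times> \<real> \<subseteq> \<real>\<^sup>3\<close>;
  \<open>cyl_map\<close> is the covering map from the lift.\<close>

definition cyl_map :: "real \<times> real \<Rightarrow> real \<times> real \<times> real" where
  "cyl_map = (\<lambda>(v, p). (cos v, sin v, p))"

definition regular_value :: "(real \<times> real \<Rightarrow> real) \<Rightarrow> real \<Rightarrow> bool" where
  "regular_value f c \<longleftrightarrow>
     (\<forall>x. f x = c \<longrightarrow> (\<exists>D. (f has_derivative D) (at x) \<and> D \<noteq> (\<lambda>_. 0)))"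

text \<open>Orbit of the regularized flow (time \<open>\<tau>\<close>) of \<open>H\<^sub>\<lambda> + H\<^sub>\<nu>\<close>, with \<open>\<nu>\<close> lifted to \<open>\<real>\<close>:
  Hamilton's equations, defined for all \<open>\<tau>\<close>.\<close>

definition reg_orbit :: "real \<Rightarrow> real \<Rightarrow> real \<Rightarrow> real \<Rightarrow>
    (real \<Rightarrow> real) \<Rightarrow> (real \<Rightarrow> real) \<Rightarrow> (real \<Rightarrow> real) \<Rightarrow> (real \<Rightarrow> real) \<Rightarrow> bool" where
  "reg_orbit d m1 m2 h l pl v pv \<longleftrightarrow>
     (\<forall>\<tau>. (l has_real_derivative pl \<tau>) (at \<tau>)
        \<and> (pl has_real_derivative
             (d * (m1 + m2) * sinh (l \<tau>) + 2 * h * d^2 * cosh (l \<tau>) * sinh (l \<tau>))) (at \<tau>)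
        \<and> (v has_real_derivative pv \<tau>) (at \<tau>)
        \<and> (pv has_real_derivative
             (- d * (m1 - m2) * cos (v \<tau>) - 2 * h * d^2 * sin (v \<tau>) * cos (v \<tau>))) (at \<tau>))"

definition min_period :: "(real \<Rightarrow> 'a) \<Rightarrow> real" where
  "min_period f = (THE T. 0 < T \<and> (\<forall>t. f (t + T) = f t) \<and>
                         (\<forall>S. 0 < S \<and> S < T \<longrightarrow> \<not> (\<forall>t. f (t + S) = f t)))"

definition rot_number :: "(real \<Rightarrow> real) \<Rightarrow> (real \<Rightarrow> real) \<Rightarrow> (real \<Rightarrow> real) \<Rightarrow> (real \<Rightarrow> real) \<Rightarrow> real" where
  "rot_number l pl v pv =
     min_period (\<lambda>\<tau>. cyl_map (v \<tau>, pv \<tau>)) / min_period (\<lambda>\<tau>. (l \<tau>, pl \<tau>))"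

definition collision :: "real \<Rightarrow> real \<Rightarrow> bool" where
  "collision l v \<longleftrightarrow> l = 0 \<and> (\<exists>k::int. v = pi/2 + 2 * pi * k \<or> v = - pi/2 + 2 * pi * k)"

end

(*
  Both separated motions solve autonomous equations x'' = F(x). At a collision
  lambda = 0 and nu = pi/2 (mod pi), and the forces are point-symmetric about exactly
  these values, so by uniqueness of solutions each motion is time-reversal symmetric
  about every collision time. Composing the reflections about two collision times
  tau1 < tau2 translates time by P = 2 (tau2 - tau1) and maps each motion to itself
  (nu up to a multiple of 2 pi), so P is a common period. Neither motion is constant,
  because the collision states are critical points of H_lambda resp. H_nu while the
  energy levels are regular. Hence P is an integer multiple of both minimal periods
  T_lambda and T_nu, and W = T_nu / T_lambda is rational.
*)

theory Submission
  imports Defs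
begin

section \<open>Uniqueness and time-reversal symmetry for x'' = F(x)\<close>

lemma gronwall_vanishing:
  fixes e e' :: "real \<Rightarrow> real"
  assumes deriv: "\<And>u. u \<in> {min s t..max s t} \<Longrightarrow> (e has_real_derivative e' u) (at u)"
    and bound: "\<And>u. u \<in> {min s t..max s t} \<Longrightarrow> \<bar>e' u\<bar> \<le> K * e u"
    and "e s = 0" and "0 \<le> e t"
  shows "e t = 0"
proof (cases "s \<le> t")
  case True
  define f where "f u = e u * exp (- K * u)" for u
  have "f t \<le> f s"
  proof (rule DERIV_nonpos_imp_nonincreasing[OF True])
    fix u assume "s \<le> u" "u \<le> t"
    then have u: "u \<in> {min s t..max s t}" by simp
    have "(f has_real_derivative (e' u - K * e u) * exp (- K * u)) (at u)"
      unfolding f_def by (rule derivative_eq_intros deriv[OF u] refl | simp)+ (simp add: algebra_simps)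
    moreover have "(e' u - K * e u) * exp (- K * u) \<le> 0"
      using bound[OF u] by (intro mult_nonpos_nonneg) auto
    ultimately show "\<exists>y. (f has_real_derivative y) (at u) \<and> y \<le> 0" by blast
  qed
  then show ?thesis using \<open>e s = 0\<close> \<open>0 \<le> e t\<close> by (simp add: f_def mult_le_0_iff)
next
  case False
  define f where "f u = e u * exp (K * u)" for u
  have "f t \<le> f s"
  proof (rule DERIV_nonneg_imp_nondecreasing[of t s f])
    show "t \<le> s" using False by simp
    fix u assume "t \<le> u" "u \<le> s"
    then have u: "u \<in> {min s t..max s t}" by simp
    have "(f has_real_derivative (e' u + K * e u) * exp (K * u)) (at u)"
      unfolding f_def by (rule derivative_eq_intros deriv[OF u] refl | simp)+ (simp add: algebra_simps)
    moreover have "0 \<le> (e' u + K * e u) * exp (K * u)"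
      using bound[OF u] by (intro mult_nonneg_nonneg) auto
    ultimately show "\<exists>y. (f has_real_derivative y) (at u) \<and> 0 \<le> y" by blast
  qed
  then show ?thesis using \<open>e s = 0\<close> \<open>0 \<le> e t\<close> by (simp add: f_def mult_le_0_iff)
qed

lemma C1_differentiable_on_imp_lipschitz_on:
  fixes f :: "real \<Rightarrow> real"
  assumes "f C1_differentiable_on UNIV" and "compact S" and "convex S"
  obtains L where "L-lipschitz_on S f"
proof -
  obtain f' where f': "\<And>x. (f has_real_derivative f' x) (at x)" and "continuous_on UNIV f'"
    using assms(1) unfolding C1_differentiable_on_def has_real_derivative_iff_has_vector_derivative
    by blast
  then have "bounded (f' ` S)"
    using \<open>compact S\<close>
    by (meson compact_continuous_image compact_imp_bounded continuous_on_subset subset_UNIV)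
  then obtain B where "B > 0" and B: "\<And>x. x \<in> S \<Longrightarrow> \<bar>f' x\<bar> \<le> B"
    unfolding bounded_pos by auto
  have "B-lipschitz_on S f"
  proof (rule lipschitz_onI)
    fix x y assume "x \<in> S" "y \<in> S"
    have "\<And>z. z \<in> S \<Longrightarrow> (f has_field_derivative f' z) (at z within S)"
      using f' by (rule has_field_derivative_at_within)
    then show "dist (f x) (f y) \<le> B * dist x y"
      unfolding dist_real_def using field_differentiable_bound[OF \<open>convex S\<close>] B \<open>x \<in> S\<close> \<open>y \<in> S\<close>
      by (metis real_norm_def)
  qed (use \<open>B > 0\<close> in simp)
  then show ?thesis by (rule that)
qed

lemma second_order_ode_unique:
  fixes F x1 p1 x2 p2 :: "real \<Rightarrow> real"
  assumes F: "F C1_differentiable_on UNIV"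
    and x1: "\<And>t. (x1 has_real_derivative p1 t) (at t)" "\<And>t. (p1 has_real_derivative F (x1 t)) (at t)"
    and x2: "\<And>t. (x2 has_real_derivative p2 t) (at t)" "\<And>t. (p2 has_real_derivative F (x2 t)) (at t)"
    and "x1 s = x2 s" and "p1 s = p2 s"
  shows "x1 t = x2 t \<and> p1 t = p2 t"
proof -
  define I where "I = {min s t..max s t}"
  have "continuous_on I x1" "continuous_on I x2"
    using x1(1) x2(1) by (meson DERIV_isCont continuous_at_imp_continuous_on)+
  then have "bounded (x1 ` I \<union> x2 ` I)"
    unfolding I_def by (simp add: compact_imp_bounded compact_continuous_image)
  then obtain M where "\<forall>y \<in> x1 ` I \<union> x2 ` I. \<bar>y\<bar> \<le> M"
    unfolding bounded_real by blast
  then have M: "\<And>u. u \<in> I \<Longrightarrow> x1 u \<in> cball 0 M \<and> x2 u \<in> cball 0 M"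
    by auto
  obtain L where L: "L-lipschitz_on (cball 0 M) F"
    by (rule C1_differentiable_on_imp_lipschitz_on[OF F compact_cball convex_cball])
  define e where "e u = (x1 u - x2 u)\<^sup>2 + (p1 u - p2 u)\<^sup>2" for u
  define e' where "e' u = 2 * (x1 u - x2 u) * (p1 u - p2 u) + 2 * (p1 u - p2 u) * (F (x1 u) - F (x2 u))" for u
  have "(e has_real_derivative e' u) (at u)" for u
    unfolding e_def e'_def
    by (rule derivative_eq_intros x1 x2 refl | simp)+ (simp add: algebra_simps)
  moreover have "\<bar>e' u\<bar> \<le> (1 + L) * e u" if "u \<in> {min s t..max s t}" for u
  proof -
    define a b where "a = x1 u - x2 u" and "b = p1 u - p2 u"
    have "dist (F (x1 u)) (F (x2 u)) \<le> L * dist (x1 u) (x2 u)"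
      using M[OF that[folded I_def]] by (intro lipschitz_onD[OF L]) auto
    then have lip: "\<bar>F (x1 u) - F (x2 u)\<bar> \<le> L * \<bar>a\<bar>"
      by (simp add: a_def dist_real_def)
    have "0 \<le> (\<bar>a\<bar> - \<bar>b\<bar>)\<^sup>2" by simp
    then have ab: "2 * \<bar>a\<bar> * \<bar>b\<bar> \<le> a\<^sup>2 + b\<^sup>2" by (simp add: power2_eq_square algebra_simps)
    have "\<bar>e' u\<bar> \<le> 2 * \<bar>a\<bar> * \<bar>b\<bar> + 2 * \<bar>b\<bar> * \<bar>F (x1 u) - F (x2 u)\<bar>"
      unfolding e'_def a_def b_def by (metis abs_mult abs_numeral abs_triangle_ineq)
    also have "\<dots> \<le> 2 * \<bar>a\<bar> * \<bar>b\<bar> + 2 * \<bar>b\<bar> * (L * \<bar>a\<bar>)"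
      using lip by (intro add_left_mono mult_left_mono) auto
    also have "\<dots> = (1 + L) * (2 * \<bar>a\<bar> * \<bar>b\<bar>)" by (simp add: algebra_simps)
    also have "\<dots> \<le> (1 + L) * e u"
      using ab lipschitz_on_nonneg[OF L] by (intro mult_left_mono) (auto simp: e_def a_def b_def)
    finally show ?thesis .
  qed
  moreover have "e s = 0" "0 \<le> e t"
    using \<open>x1 s = x2 s\<close> \<open>p1 s = p2 s\<close> by (simp_all add: e_def)
  ultimately have "e t = 0"
    by (rule gronwall_vanishing)
  then show ?thesis by (simp add: e_def)
qed

lemma point_reflection_of_solution:
  fixes F x p :: "real \<Rightarrow> real"
  assumes F: "F C1_differentiable_on UNIV"
    and x: "\<And>t. (x has_real_derivative p t) (at t)" "\<And>t. (p has_real_derivative F (x t)) (at t)"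
    and odd: "\<And>y. F (2 * a - y) = - F y" and "x s = a"
  shows "x (2 * s - t) = 2 * a - x t \<and> p (2 * s - t) = p t"
proof -
  define y where "y u = 2 * a - x (2 * s - u)" for u
  define q where "q u = p (2 * s - u)" for u
  have reflect: "((\<lambda>u. 2 * s - u) has_real_derivative -1) (at u)" for u
    by (rule derivative_eq_intros refl | simp)+
  have "(y has_real_derivative q u) (at u)" for u
    unfolding y_def q_def using DERIV_diff[OF DERIV_const DERIV_chain2[OF x(1) reflect]] by simp
  moreover have "(q has_real_derivative F (y u)) (at u)" for u
    unfolding y_def q_def odd using DERIV_chain2[OF x(2) reflect] by simp
  moreover have "x s = y s" "p s = q s"
    using \<open>x s = a\<close> by (simp_all add: y_def q_def)
  ultimately have "x (2 * s - t) = y (2 * s - t) \<and> p (2 * s - t) = q (2 * s - t)"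
    by (intro second_order_ode_unique[OF F x])
  then show ?thesis by (simp add: y_def q_def)
qed

lemma two_point_reflections_translate:
  fixes F x p :: "real \<Rightarrow> real"
  assumes F: "F C1_differentiable_on UNIV"
    and x: "\<And>t. (x has_real_derivative p t) (at t)" "\<And>t. (p has_real_derivative F (x t)) (at t)"
    and odd_a: "\<And>y. F (2 * a - y) = - F y" and "x s = a"
    and odd_b: "\<And>y. F (2 * b - y) = - F y" and "x r = b"
  shows "x (t + 2 * (r - s)) = x t + 2 * (b - a) \<and> p (t + 2 * (r - s)) = p t"
proof -
  have shift: "t + 2 * (r - s) = 2 * r - (2 * s - t)" by simp
  show ?thesis
    unfolding shift
    using point_reflection_of_solution[OF F x odd_a \<open>x s = a\<close>, of t]
      point_reflection_of_solution[OF F x odd_b \<open>x r = b\<close>, of "2 * s - t"]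
    by simp
qed

section \<open>Minimal periods of continuous periodic functions\<close>

lemma periodic_add_of_int_mult:
  fixes f :: "real \<Rightarrow> 'a" and T :: real
  assumes "\<forall>t. f (t + T) = f t"
  shows "f (t + of_int k * T) = f t"
proof -
  have nat_mult: "f (t + real n * T) = f t" for n t
  proof (induction n)
    case (Suc n)
    have "f (t + real (Suc n) * T) = f ((t + real n * T) + T)" by (simp add: algebra_simps)
    with assms Suc show ?case by simp
  qed simp
  show ?thesis
  proof (cases "k \<ge> 0")
    case True
    then show ?thesis using nat_mult[where n = "nat k" and t = t] by simp
  next
    case False
    then have "f ((t + of_int k * T) + real (nat (- k)) * T) = f (t + of_int k * T)"
      by (rule_tac nat_mult)
    with False show ?thesis by simp
  qed
qed

lemma continuous_with_small_periods_const:
  fixes f :: "real \<Rightarrow> 'a::metric_space"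
  assumes cont: "continuous_on UNIV f"
    and small: "\<And>\<epsilon>. \<epsilon> > 0 \<Longrightarrow> \<exists>T. 0 < T \<and> T < \<epsilon> \<and> (\<forall>t. f (t + T) = f t)"
  shows "f t = f 0"
proof (rule ccontr)
  assume "f t \<noteq> f 0"
  then have e: "dist (f t) (f 0) > 0" by simp
  obtain \<delta> where "\<delta> > 0" and \<delta>: "\<And>s. dist s t < \<delta> \<Longrightarrow> dist (f s) (f t) < dist (f t) (f 0)"
    using cont e unfolding continuous_on_eq_continuous_at[OF open_UNIV] continuous_at_eps_delta
    by (metis UNIV_I)
  obtain T where "0 < T" "T < \<delta>" and T: "\<forall>t. f (t + T) = f t"
    using small[OF \<open>\<delta> > 0\<close>] by blast
  define k where "k = \<lfloor>t / T\<rfloor>"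
  have "of_int k * T \<le> t" "t < of_int k * T + T"
    using floor_divide_lower[of T t] floor_divide_upper[of T t] \<open>0 < T\<close>
    by (simp_all add: k_def algebra_simps)
  then have "dist (of_int k * T) t < \<delta>"
    using \<open>T < \<delta>\<close> by (simp add: dist_real_def)
  moreover have "f (of_int k * T) = f 0"
    using periodic_add_of_int_mult[OF T, of 0 k] by simp
  ultimately show False
    using \<delta> by (fastforce simp: dist_commute)
qed

lemma least_period_exists:
  fixes f :: "real \<Rightarrow> 'a::metric_space"
  assumes cont: "continuous_on UNIV f" and "0 < P" and "\<forall>t. f (t + P) = f t"
    and nonconst: "\<exists>t. f t \<noteq> f 0"
  obtains c where "0 < c" "\<forall>t. f (t + c) = f t"
    "\<And>T. 0 < T \<Longrightarrow> T < c \<Longrightarrow> \<not> (\<forall>t. f (t + T) = f t)"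
proof -
  define Per where "Per = {T. \<forall>t. f (t + T) = f t}"
  define S where "S = Per \<inter> {0<..}"
  define c where "c = Inf S"
  have "P \<in> S" using assms by (simp add: S_def Per_def)
  have "bdd_below S" by (auto simp: S_def intro: bdd_belowI[of _ 0])
  have "closed Per"
    unfolding Per_def
    by (intro closed_Collect_all closed_Collect_eq continuous_on_compose2[OF cont]) (auto intro!: continuous_intros)
  have "c \<in> closure S"
    unfolding c_def using \<open>P \<in> S\<close> \<open>bdd_below S\<close> by (intro closure_contains_Inf) auto
  also have "closure S \<subseteq> Per"
    using \<open>closed Per\<close> by (simp add: S_def closure_minimal)
  finally have "\<forall>t. f (t + c) = f t" by (simp add: Per_def)
  have lower: "c \<le> T" if "T \<in> S" for T
    unfolding c_def using that \<open>bdd_below S\<close> by (rule cInf_lower)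
  have "0 \<le> c"
    unfolding c_def using \<open>P \<in> S\<close> by (intro cInf_greatest) (auto simp: S_def)
  moreover have "c \<noteq> 0"
  proof
    assume "c = 0"
    have "\<exists>T. 0 < T \<and> T < \<epsilon> \<and> (\<forall>t. f (t + T) = f t)" if "\<epsilon> > 0" for \<epsilon>
      using cInf_less_iff[OF _ \<open>bdd_below S\<close>, of \<epsilon>] \<open>P \<in> S\<close> \<open>c = 0\<close> that
      by (auto simp: c_def S_def Per_def)
    then have "f t = f 0" for t
      by (rule continuous_with_small_periods_const[OF cont])
    with nonconst show False by blast
  qed
  ultimately have "0 < c" by simp
  moreover have "\<not> (\<forall>t. f (t + T) = f t)" if "0 < T" "T < c" for T
    using lower[of T] that by (auto simp: S_def Per_def)
  ultimately show ?thesis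
    using that \<open>\<forall>t. f (t + c) = f t\<close> by blast
qed

lemma min_period_eqI:
  fixes f :: "real \<Rightarrow> 'a" and c :: real
  assumes "0 < c" "\<forall>t. f (t + c) = f t"
    and least: "\<And>T. 0 < T \<Longrightarrow> T < c \<Longrightarrow> \<not> (\<forall>t. f (t + T) = f t)"
  shows "min_period f = c"
  unfolding min_period_def
proof (rule the_equality)
  fix T
  assume T: "0 < T \<and> (\<forall>t. f (t + T) = f t) \<and>
    (\<forall>S. 0 < S \<and> S < T \<longrightarrow> \<not> (\<forall>t. f (t + S) = f t))"
  show "T = c"
    using T assms by (metis linorder_neqE_linordered_idom)
qed (use assms in blast)

lemma least_period_divides:
  fixes f :: "real \<Rightarrow> 'a" and c P :: real
  assumes "0 < c" and per_c: "\<forall>t. f (t + c) = f t"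
    and least: "\<And>T. 0 < T \<Longrightarrow> T < c \<Longrightarrow> \<not> (\<forall>t. f (t + T) = f t)"
    and per_P: "\<forall>t. f (t + P) = f t"
  shows "\<exists>k::int. P = of_int k * c"
proof -
  define k where "k = \<lfloor>P / c\<rfloor>"
  define r where "r = P - of_int k * c"
  have "0 \<le> r" "r < c"
    using floor_divide_lower[of c P] floor_divide_upper[of c P] \<open>0 < c\<close>
    by (simp_all add: r_def k_def algebra_simps)
  have "f (t + r) = f t" for t
  proof -
    have "f (t + r) = f ((t + r) + of_int k * c)"
      using periodic_add_of_int_mult[OF per_c] by simp
    also have "\<dots> = f t"
      using per_P by (simp add: r_def)
    finally show ?thesis .
  qed
  then have "\<not> 0 < r"
    using least[of r] \<open>r < c\<close> by blast
  then have "r = 0"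
    using \<open>0 \<le> r\<close> by simp
  then show ?thesis by (auto simp: r_def)
qed

lemma min_period_divides_period:
  fixes f :: "real \<Rightarrow> 'a::metric_space"
  assumes "continuous_on UNIV f" and "0 < P" and "\<forall>t. f (t + P) = f t"
    and "\<exists>t. f t \<noteq> f 0"
  shows "0 < min_period f \<and> (\<exists>k::int. P = of_int k * min_period f)"
proof -
  obtain c where "0 < c" "\<forall>t. f (t + c) = f t"
    "\<And>T. 0 < T \<Longrightarrow> T < c \<Longrightarrow> \<not> (\<forall>t. f (t + T) = f t)"
    using least_period_exists[OF assms] by blast
  moreover from this have "min_period f = c"
    by (rule min_period_eqI)
  ultimately show ?thesis
    using least_period_divides[of c f P] \<open>\<forall>t. f (t + P) = f t\<close> by auto
qed

lemma min_period_ratio_rational: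
  fixes f :: "real \<Rightarrow> 'a::metric_space" and g :: "real \<Rightarrow> 'b::metric_space"
  assumes "continuous_on UNIV f" "\<exists>t. f t \<noteq> f 0"
    and "continuous_on UNIV g" "\<exists>t. g t \<noteq> g 0"
    and "0 < P" "\<forall>t. f (t + P) = f t" "\<forall>t. g (t + P) = g t"
  shows "min_period f / min_period g \<in> \<rat>"
proof -
  obtain j :: int where j: "P = of_int j * min_period f" and "0 < min_period f"
    using min_period_divides_period[of f P] assms by blast
  obtain k :: int where k: "P = of_int k * min_period g" and "0 < min_period g"
    using min_period_divides_period[of g P] assms by blast
  have "min_period f / min_period g = of_int k / of_int j"
    using j k \<open>0 < P\<close> \<open>0 < min_period f\<close> \<open>0 < min_period g\<close>
    by (auto simp: field_simps)
  then show ?thesis by (simp add: Rats_divide)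
qed

section \<open>The regularized two-center problem\<close>

definition lam_force :: "real \<Rightarrow> real \<Rightarrow> real \<Rightarrow> real \<Rightarrow> real \<Rightarrow> real" where
  "lam_force d m1 m2 h x = d * (m1 + m2) * sinh x + 2 * h * d^2 * cosh x * sinh x"

definition nu_force :: "real \<Rightarrow> real \<Rightarrow> real \<Rightarrow> real \<Rightarrow> real \<Rightarrow> real" where
  "nu_force d m1 m2 h x = - d * (m1 - m2) * cos x - 2 * h * d^2 * sin x * cos x"

lemma reg_orbitD:
  assumes "reg_orbit d m1 m2 h l pl v pv"
  shows "(l has_real_derivative pl \<tau>) (at \<tau>)"
    and "(pl has_real_derivative lam_force d m1 m2 h (l \<tau>)) (at \<tau>)"
    and "(v has_real_derivative pv \<tau>) (at \<tau>)"
    and "(pv has_real_derivative nu_force d m1 m2 h (v \<tau>)) (at \<tau>)"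
  using assms by (simp_all add: reg_orbit_def lam_force_def nu_force_def)

lemma reg_orbit_continuous:
  assumes "reg_orbit d m1 m2 h l pl v pv"
  shows "continuous_on UNIV (\<lambda>\<tau>. (l \<tau>, pl \<tau>))"
    and "continuous_on UNIV (\<lambda>\<tau>. cyl_map (v \<tau>, pv \<tau>))"
proof -
  have "continuous_on UNIV l" "continuous_on UNIV pl" "continuous_on UNIV v" "continuous_on UNIV pv"
    using reg_orbitD[OF assms] by (meson DERIV_isCont continuous_at_imp_continuous_on)+
  then show "continuous_on UNIV (\<lambda>\<tau>. (l \<tau>, pl \<tau>))"
    and "continuous_on UNIV (\<lambda>\<tau>. cyl_map (v \<tau>, pv \<tau>))"
    by (auto simp: cyl_map_def intro!: continuous_intros)
qed

lemma lam_force_C1: "lam_force d m1 m2 h C1_differentiable_on UNIV"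
  unfolding C1_differentiable_on_def has_real_derivative_iff_has_vector_derivative[symmetric]
proof (intro exI conjI ballI)
  show "(lam_force d m1 m2 h has_real_derivative
      d * (m1 + m2) * cosh x + 2 * h * d^2 * (sinh x * sinh x + cosh x * cosh x)) (at x)" for x
    unfolding lam_force_def by (rule derivative_eq_intros refl | simp)+ (simp add: algebra_simps)
qed (intro continuous_intros)

lemma nu_force_C1: "nu_force d m1 m2 h C1_differentiable_on UNIV"
  unfolding C1_differentiable_on_def has_real_derivative_iff_has_vector_derivative[symmetric]
proof (intro exI conjI ballI)
  show "(nu_force d m1 m2 h has_real_derivative
      d * (m1 - m2) * sin x - 2 * h * d^2 * (cos x * cos x - sin x * sin x)) (at x)" for x
    unfolding nu_force_def by (rule derivative_eq_intros refl | simp)+ (simp add: algebra_simps)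
qed (intro continuous_intros)

lemma lam_force_minus: "lam_force d m1 m2 h (- x) = - lam_force d m1 m2 h x"
  by (simp add: lam_force_def)

lemma nu_force_reflect:
  assumes "2 * a = 2 * pi * of_int n + pi"
  shows "nu_force d m1 m2 h (2 * a - x) = - nu_force d m1 m2 h x"
proof -
  have "cos (2 * a - x) = - cos x" "sin (2 * a - x) = sin x"
    unfolding assms by (simp_all add: cos_diff sin_diff cos_add sin_add)
  then show ?thesis by (simp add: nu_force_def)
qed

lemma collisionD:
  assumes "collision l v"
  shows "l = 0 \<and> cos v = 0 \<and> (\<exists>n::int. 2 * v = 2 * pi * of_int n + pi)"
proof -
  obtain k :: int where "v = pi/2 + 2 * pi * k \<or> v = - pi/2 + 2 * pi * k" and "l = 0"
    using assms by (auto simp: collision_def)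
  then consider "2 * v = 2 * pi * of_int (2 * k) + pi" | "2 * v = 2 * pi * of_int (2 * k - 1) + pi"
    by (auto simp: algebra_simps)
  then have "\<exists>n::int. 2 * v = 2 * pi * of_int n + pi"
    by cases blast+
  moreover from this have "cos v = 0"
    by (auto simp: cos_zero_iff_int2 field_simps intro!: exI)
  ultimately show ?thesis using \<open>l = 0\<close> by blast
qed

lemma lam_motion_periodic:
  assumes orbit: "reg_orbit d m1 m2 h l pl v pv"
    and "collision (l s) (v s)" and "collision (l r) (v r)"
  shows "(l (t + 2 * (r - s)), pl (t + 2 * (r - s))) = (l t, pl t)"
proof -
  have odd: "\<And>y. lam_force d m1 m2 h (2 * 0 - y) = - lam_force d m1 m2 h y"
    using lam_force_minus by simp
  have "l s = 0" "l r = 0"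
    using assms collisionD by blast+
  then show ?thesis
    using two_point_reflections_translate[OF lam_force_C1 reg_orbitD(1,2)[OF orbit] odd _ odd, of s r t]
    by simp
qed

lemma cyl_map_add_2pi: "cyl_map (x + 2 * pi * of_int k, p) = cyl_map (x, p)"
  by (simp add: cyl_map_def cos_add sin_add)

lemma nu_motion_periodic:
  assumes orbit: "reg_orbit d m1 m2 h l pl v pv"
    and "collision (l s) (v s)" and "collision (l r) (v r)"
  shows "cyl_map (v (t + 2 * (r - s)), pv (t + 2 * (r - s))) = cyl_map (v t, pv t)"
proof -
  obtain i j :: int where i: "2 * v s = 2 * pi * of_int i + pi" and j: "2 * v r = 2 * pi * of_int j + pi"
    using assms collisionD by meson
  have "v (t + 2 * (r - s)) = v t + 2 * (v r - v s)" "pv (t + 2 * (r - s)) = pv t"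
    using two_point_reflections_translate[OF nu_force_C1 reg_orbitD(3,4)[OF orbit]
        nu_force_reflect[OF i] refl nu_force_reflect[OF j] refl] by auto
  moreover have "2 * (v r - v s) = 2 * pi * of_int (j - i)"
    using i j by (simp add: algebra_simps)
  ultimately show ?thesis
    using cyl_map_add_2pi[of "v t" "j - i" "pv t"] by (simp only:)
qed

lemma regular_value_not_critical:
  assumes "regular_value f c" and "(f has_derivative (\<lambda>_. 0)) (at x)"
  shows "f x \<noteq> c"
  using assms has_derivative_unique unfolding regular_value_def by blast

lemma Hlam_critical_origin: "(Hlam d m1 m2 h has_derivative (\<lambda>_. 0)) (at (0, 0))"
proof -
  have cosh': "(cosh has_real_derivative sinh x) (at x)" for x :: real
    using has_field_derivative_cosh[OF DERIV_ident] by simp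
  have "Hlam d m1 m2 h = (\<lambda>x. (snd x)^2 / 2 - d * (m1 + m2) * cosh (fst x) - h * d^2 * (cosh (fst x))^2)"
    by (simp add: Hlam_def fun_eq_iff split_def)
  then show ?thesis
    by (auto intro!: derivative_eq_intros DERIV_compose_FDERIV[OF cosh'])
qed

lemma Hnu_critical:
  assumes "cos a = 0"
  shows "(Hnu d m1 m2 h has_derivative (\<lambda>_. 0)) (at (a, 0))"
proof -
  have "Hnu d m1 m2 h = (\<lambda>x. (snd x)^2 / 2 + d * (m1 - m2) * sin (fst x) + h * d^2 * (sin (fst x))^2)"
    by (simp add: Hnu_def fun_eq_iff split_def)
  then show ?thesis
    using assms by (auto intro!: derivative_eq_intros)
qed

lemma Hnu_cyl_map_eq:
  assumes "cyl_map x = cyl_map y"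
  shows "Hnu d m1 m2 h x = Hnu d m1 m2 h y"
  using assms by (auto simp: cyl_map_def Hnu_def split: prod.splits)

lemma lam_motion_nonconstant:
  assumes l: "\<And>t. (l has_real_derivative pl t) (at t)"
    and energy: "\<forall>t. Hlam d m1 m2 h (l t, pl t) = c" and "regular_value (Hlam d m1 m2 h) c"
    and "l s = 0"
  shows "\<exists>t. (l t, pl t) \<noteq> (l 0, pl 0)"
proof (rule ccontr)
  assume "\<not> ?thesis"
  then have "l = (\<lambda>_. l 0)" by auto
  then have "(l has_real_derivative 0) (at s)"
    by (metis DERIV_const)
  then have "pl s = 0"
    using DERIV_unique[OF l] by blast
  then have "Hlam d m1 m2 h (0, 0) = c"
    using energy \<open>l s = 0\<close> by metis
  with regular_value_not_critical[OF \<open>regular_value _ c\<close> Hlam_critical_origin] show False ..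
qed

lemma nu_motion_nonconstant:
  assumes v: "\<And>t. (v has_real_derivative pv t) (at t)"
    and energy: "\<forall>t. Hnu d m1 m2 h (v t, pv t) = c" and "regular_value (Hnu d m1 m2 h) c"
    and "cos (v s) = 0"
  shows "\<exists>t. cyl_map (v t, pv t) \<noteq> cyl_map (v 0, pv 0)"
proof (rule ccontr)
  assume "\<not> ?thesis"
  then have "(\<lambda>t. cos (v t)) = (\<lambda>_. cos (v 0))"
    by (auto simp: cyl_map_def fun_eq_iff)
  moreover have "((\<lambda>t. cos (v t)) has_real_derivative - sin (v s) * pv s) (at s)"
    using DERIV_chain2[OF DERIV_cos v] by simp
  ultimately have "sin (v s) * pv s = 0"
    using DERIV_unique DERIV_const by fastforce
  moreover have "sin (v s) \<noteq> 0"
    using sin_cos_squared_add[of "v s"] \<open>cos (v s) = 0\<close> by auto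
  ultimately have "Hnu d m1 m2 h (v s, 0) = c"
    using energy by (metis mult_eq_0_iff)
  with regular_value_not_critical[OF \<open>regular_value _ c\<close> Hnu_critical[OF \<open>cos (v s) = 0\<close>]]
  show False ..
qed

theorem corollary3:
  fixes d m1 m2 h g \<tau>1 \<tau>2 :: real
    and Cl :: "(real \<times> real) set" and Cn :: "(real \<times> real \<times> real) set"
    and l pl v pv :: "real \<Rightarrow> real"
  assumes "d > 0" and "m1 > 0" and "m2 > 0" and "h < 0"
    and "regular_value (Hlam d m1 m2 h) (- g)"
    and "regular_value (Hnu d m1 m2 h) g"
    and "Cl \<in> components {x. Hlam d m1 m2 h x = - g}" and "compact Cl"
    and "Cn \<in> components (cyl_map ` {x. Hnu d m1 m2 h x = g})" and "compact Cn"
    and "reg_orbit d m1 m2 h l pl v pv"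
    and "\<forall>\<tau>. (l \<tau>, pl \<tau>) \<in> Cl \<and> cyl_map (v \<tau>, pv \<tau>) \<in> Cn"
    and "\<tau>1 \<noteq> \<tau>2"
    and "collision (l \<tau>1) (v \<tau>1)" and "collision (l \<tau>2) (v \<tau>2)"
  shows "rot_number l pl v pv \<in> \<rat>"
proof -
  note orbit = \<open>reg_orbit d m1 m2 h l pl v pv\<close>
  note on_torus = \<open>\<forall>\<tau>. (l \<tau>, pl \<tau>) \<in> Cl \<and> cyl_map (v \<tau>, pv \<tau>) \<in> Cn\<close>
  obtain s r where "s < r" and coll: "collision (l s) (v s)" "collision (l r) (v r)"
    using \<open>\<tau>1 \<noteq> \<tau>2\<close> assms(14,15) by (metis linorder_neqE_linordered_idom)
  have "\<forall>t. Hlam d m1 m2 h (l t, pl t) = - g"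
    using in_components_subset[OF assms(7)] on_torus by blast
  moreover have "\<forall>t. Hnu d m1 m2 h (v t, pv t) = g"
    using in_components_subset[OF assms(9)] on_torus Hnu_cyl_map_eq by fast
  ultimately have "\<exists>t. (l t, pl t) \<noteq> (l 0, pl 0)"
    and "\<exists>t. cyl_map (v t, pv t) \<noteq> cyl_map (v 0, pv 0)"
    using lam_motion_nonconstant[OF reg_orbitD(1)[OF orbit] _ assms(5)]
      nu_motion_nonconstant[OF reg_orbitD(3)[OF orbit] _ assms(6)] collisionD[OF coll(1)]
    by blast+
  moreover have "0 < 2 * (r - s)"
    using \<open>s < r\<close> by simp
  ultimately show ?thesis
    unfolding rot_number_def
    using reg_orbit_continuous[OF orbit] lam_motion_periodic[OF orbit coll]
      nu_motion_periodic[OF orbit coll]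
    by (intro min_period_ratio_rational) blast+
qed

end
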